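(* Let $p\ge 3$ be a prime, $m,k\ge1$ integers, and $t,u\in\mathbb{Z}_p$ with $u\neq0$ and $t^2\equiv u\pmod p$. Let $G$ be the set of all $m\times k$ matrices over $\mathbb{Z}_p$ with the operation $[a_{ij}]*[b_{ij}]=[(t a_{ij}+u b_{ij})\bmod p]$. Then $(G,* )$ is a cancellative AG-groupoid.
   Context: An AG-groupoid is a set with a binary operation satisfying $(a*b)*c=(c*b)*a$ for all $a,b,c$. An element $a$ of an AG-groupoid $G$ is left cancellative if $a*x=a*y$ implies $x=y$, and right cancellative if $x*a=y*a$ implies $x=y$; $G$ is cancellative if every element is both left and right cancellative. *)

theory Defs
  imports "HOL-Number_Theory.Number_Theory"
begin

definition ag_groupoid :: "'a set \<Rightarrow> ('a \<Rightarrow> 'a \<Rightarrow> 'a) \<Rightarrow> bool" where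
  "ag_groupoid G f \<longleftrightarrow> (\<forall>a\<in>G. \<forall>b\<in>G. f a b \<in> G) \<and>
     (\<forall>a\<in>G. \<forall>b\<in>G. \<forall>c\<in>G. f (f a b) c = f (f c b) a)"

definition left_cancellative :: "'a set \<Rightarrow> ('a \<Rightarrow> 'a \<Rightarrow> 'a) \<Rightarrow> 'a \<Rightarrow> bool" where
  "left_cancellative G f a \<longleftrightarrow> (\<forall>x\<in>G. \<forall>y\<in>G. f a x = f a y \<longrightarrow> x = y)"

definition right_cancellative :: "'a set \<Rightarrow> ('a \<Rightarrow> 'a \<Rightarrow> 'a) \<Rightarrow> 'a \<Rightarrow> bool" where
  "right_cancellative G f a \<longleftrightarrow> (\<forall>x\<in>G. \<forall>y\<in>G. f x a = f y a \<longrightarrow> x = y)"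

definition cancellative :: "'a set \<Rightarrow> ('a \<Rightarrow> 'a \<Rightarrow> 'a) \<Rightarrow> bool" where
  "cancellative G f \<longleftrightarrow> (\<forall>a\<in>G. left_cancellative G f a \<and> right_cancellative G f a)"

definition zp_matrices :: "int \<Rightarrow> nat \<Rightarrow> nat \<Rightarrow> (nat \<Rightarrow> nat \<Rightarrow> int) set" where
  "zp_matrices p m k = {A. (\<forall>i j. (i < m \<and> j < k \<longrightarrow> A i j \<in> {0..p-1}) \<and>
                                  (\<not>(i < m \<and> j < k) \<longrightarrow> A i j = 0))}"

definition zp_op :: "int \<Rightarrow> int \<Rightarrow> int \<Rightarrow> nat \<Rightarrow> nat \<Rightarrow>
    (nat \<Rightarrow> nat \<Rightarrow> int) \<Rightarrow> (nat \<Rightarrow> nat \<Rightarrow> int) \<Rightarrow> (nat \<Rightarrow> nat \<Rightarrow> int)" where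
  "zp_op p t u m k A B = (\<lambda>i j. if i < m \<and> j < k then (t * A i j + u * B i j) mod p else 0)"

end

theory Submission
  imports Defs
begin

text \<open>Since
  \<open>t\<^sup>2 = u\<close>, both sides of the left invertive law reduce to \<open>u a + t u b + u c\<close>, and since
  \<open>t\<close> and \<open>u\<close> are units modulo the prime \<open>p\<close>, each argument can be cancelled; the bound
  \<open>0 \<le> x < p\<close> on the entries turns congruence back into equality.\<close>

lemma eq_if_cong_in_residue_range:
  fixes p x y :: int
  assumes "[x = y] (mod p)" "x \<in> {0..p-1}" "y \<in> {0..p-1}"
  shows "x = y"
  using assms by (simp add: cong_def)

lemma mod_add_mult_cancel:
  fixes p c x y a :: int
  assumes "prime p" "\<not> p dvd c" "x \<in> {0..p-1}" "y \<in> {0..p-1}"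
    and "(a + c * x) mod p = (a + c * y) mod p"
  shows "x = y"
proof -
  have "[a + c * x = a + c * y] (mod p)"
    using assms(5) unfolding cong_def .
  then have "[c * x = c * y] (mod p)"
    by (rule cong_add_lcancel[THEN iffD1])
  moreover have "coprime c p"
    using prime_imp_coprime[OF assms(1,2)] by (rule coprime_commute[THEN iffD1])
  ultimately have "[x = y] (mod p)"
    by (simp add: cong_mult_lcancel)
  then show ?thesis
    using assms(3,4) by (rule eq_if_cong_in_residue_range)
qed

lemma not_dvd_if_square_cong:
  fixes p t u :: int
  assumes "[t^2 = u] (mod p)" "\<not> p dvd u"
  shows "\<not> p dvd t"
  using assms by (metis cong_dvd_iff dvd_mult2 power2_eq_square)

lemma mod_affine_left_invertive:
  fixes p t u a b c :: int
  assumes "[t^2 = u] (mod p)"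
  shows "(t * ((t * a + u * b) mod p) + u * c) mod p =
         (t * ((t * c + u * b) mod p) + u * a) mod p"
proof -
  have reduce: "[t * ((t * x + u * b) mod p) + u * y = t^2 * x + t * u * b + u * y] (mod p)"
    for x y
  proof -
    have "[t * ((t * x + u * b) mod p) + u * y = t * (t * x + u * b) + u * y] (mod p)"
      by (intro cong_add cong_scalar_left cong_refl) simp
    then show ?thesis
      by (simp add: power2_eq_square algebra_simps)
  qed
  have "[t * ((t * a + u * b) mod p) + u * c = t^2 * a + t * u * b + u * c] (mod p)"
    by (rule reduce)
  also have "[t^2 * a + t * u * b + u * c = u * a + t * u * b + u * c] (mod p)"
    by (intro cong_add cong_mult cong_refl assms)
  also have "u * a + t * u * b + u * c = u * c + t * u * b + u * a"
    by simp
  also have "[u * c + t * u * b + u * a = t^2 * c + t * u * b + u * a] (mod p)"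
    by (intro cong_add cong_mult cong_refl cong_sym[OF assms])
  also have "[t^2 * c + t * u * b + u * a = t * ((t * c + u * b) mod p) + u * a] (mod p)"
    by (rule cong_sym[OF reduce])
  finally show ?thesis
    unfolding cong_def .
qed

lemma zp_matrices_eqI:
  assumes "A \<in> zp_matrices p m k" "B \<in> zp_matrices p m k"
    and "\<And>i j. i < m \<Longrightarrow> j < k \<Longrightarrow> A i j = B i j"
  shows "A = B"
proof (intro ext)
  fix i j
  show "A i j = B i j"
    using assms by (cases "i < m \<and> j < k") (auto simp: zp_matrices_def)
qed

lemma zp_matrices_entry:
  assumes "A \<in> zp_matrices p m k" "i < m" "j < k"
  shows "A i j \<in> {0..p-1}"
  using assms by (simp add: zp_matrices_def)

lemma zp_op_closed:
  assumes "p > 0"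
  shows "zp_op p t u m k A B \<in> zp_matrices p m k"
  using assms by (simp add: zp_matrices_def zp_op_def)

lemma zp_op_left_invertive:
  assumes "[t^2 = u] (mod p)"
  shows "zp_op p t u m k (zp_op p t u m k A B) C = zp_op p t u m k (zp_op p t u m k C B) A"
  using mod_affine_left_invertive[OF assms] by (simp add: zp_op_def fun_eq_iff)

lemma zp_op_left_cancellative:
  assumes "prime p" "\<not> p dvd u"
  shows "left_cancellative (zp_matrices p m k) (zp_op p t u m k) A"
  unfolding left_cancellative_def
proof (intro ballI impI)
  fix X Y assume X: "X \<in> zp_matrices p m k" and Y: "Y \<in> zp_matrices p m k"
    and eq: "zp_op p t u m k A X = zp_op p t u m k A Y"
  show "X = Y"
  proof (rule zp_matrices_eqI[OF X Y])
    fix i j assume ij: "i < m" "j < k"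
    have "(t * A i j + u * X i j) mod p = (t * A i j + u * Y i j) mod p"
      using fun_cong[OF fun_cong[OF eq, of i], of j] ij by (simp add: zp_op_def)
    then show "X i j = Y i j"
      by (rule mod_add_mult_cancel[OF assms zp_matrices_entry[OF X ij] zp_matrices_entry[OF Y ij]])
  qed
qed

lemma zp_op_right_cancellative:
  assumes "prime p" "\<not> p dvd t"
  shows "right_cancellative (zp_matrices p m k) (zp_op p t u m k) A"
  unfolding right_cancellative_def
proof (intro ballI impI)
  fix X Y assume X: "X \<in> zp_matrices p m k" and Y: "Y \<in> zp_matrices p m k"
    and eq: "zp_op p t u m k X A = zp_op p t u m k Y A"
  show "X = Y"
  proof (rule zp_matrices_eqI[OF X Y])
    fix i j assume ij: "i < m" "j < k"
    have "(u * A i j + t * X i j) mod p = (u * A i j + t * Y i j) mod p"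
      using fun_cong[OF fun_cong[OF eq, of i], of j] ij by (simp add: zp_op_def add.commute)
    then show "X i j = Y i j"
      by (rule mod_add_mult_cancel[OF assms zp_matrices_entry[OF X ij] zp_matrices_entry[OF Y ij]])
  qed
qed

theorem mainTheorem7:
  fixes p t u :: int and m k :: nat
  assumes "prime p" and "p \<ge> 3" and "m \<ge> 1" and "k \<ge> 1"
    and "t \<in> {0..p-1}" and "u \<in> {0..p-1}" and "u \<noteq> 0"
    and "[t^2 = u] (mod p)"
  shows "ag_groupoid (zp_matrices p m k) (zp_op p t u m k) \<and>
         cancellative (zp_matrices p m k) (zp_op p t u m k)"
proof
  have u_unit: "\<not> p dvd u"
    using assms(6,7) zdvd_not_zless by auto
  have t_unit: "\<not> p dvd t"
    using not_dvd_if_square_cong assms(8) u_unit .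
  show "ag_groupoid (zp_matrices p m k) (zp_op p t u m k)"
    unfolding ag_groupoid_def
    using zp_op_closed zp_op_left_invertive[OF assms(8)] assms(2) by simp
  show "cancellative (zp_matrices p m k) (zp_op p t u m k)"
    unfolding cancellative_def
    using zp_op_left_cancellative[OF assms(1) u_unit]
      zp_op_right_cancellative[OF assms(1) t_unit] by blast
qed

end
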